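(* Let $p,q\in\mathbb{C}$ with $pq\neq1$ and $(p,q)\neq(\tfrac12,\tfrac12)$, and let $\xi_{p,q}\in\mathbb{P}^1(\mathbb{C})$ be as defined below. Then $\mathcal{S}_{p,q}$ is regular if and only if $\xi_{p,q}\neq\infty$ and $|\xi_{p,q}|\le1$. Moreover, if $\mathcal{S}_{p,q}$ is regular, then for every positive triangle triple $\Delta$ one has $\phi(\mathcal{S}_{p,q}(\Delta))=\xi_{p,q}^3\,\phi(\Delta)$.
   Context: $\omega=e^{2\pi i/3}$, $\mathcal{H}^+=\{z:\operatorname{Im}z>0\}$. A triangle triple is $(a,b,c)\in\mathbb{C}^3$ with pairwise distinct entries; it is positive if non-collinear and $\operatorname{Im}\frac{a-b}{c-b}>0$. For $pq\neq1$, $\alpha_{p,q}=\frac{p(1-q)}{1-pq}$, $\beta_{p,q}=\frac{q(1-p)}{1-pq}$, $\gamma_{p,q}=\frac{(1-p)(1-q)}{1-pq}$ and $\mathcal{S}_{p,q}(a,b,c)=(\alpha_{p,q}a+\beta_{p,q}b+\gamma_{p,q}c,\ \alpha_{p,q}b+\beta_{p,q}c+\gamma_{p,q}a,\ \alpha_{p,q}c+\beta_{p,q}a+\gamma_{p,q}b)$. $\mathcal{S}_{p,q}$ is called regular if either $p=q\neq\frac12$, or $p\neq q$ and $t_{p,q}:=\frac{(p-1)(2q-1)}{p-q}\in\mathbb{R}\cup\mathcal{H}^+$. Define $\xi_{p,q}=\frac{(p-q)+(p-1)(2q-1)\omega}{(p-q)+(p-1)(2q-1)\omega^2}\in\mathbb{P}^1(\mathbb{C})$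 (numerator and denominator do not both vanish when $(p,q)\neq(\frac12,\frac12)$, $pq\ne 1$). For a positive triangle triple $(a,b,c)$, its modulus is $\phi(a,b,c)=\left(\frac{a+b\omega+c\omega^2}{a+b\omega^2+c\omega}\right)^3$, which lies in the unit disk $\{|z|<1\}$. *)

theory Defs
  imports "HOL-Analysis.Analysis"
begin

definition omega :: complex where
  "omega = cis (2 * pi / 3)"

definition alpha_pq :: "complex \<Rightarrow> complex \<Rightarrow> complex" where
  "alpha_pq p q = p * (1 - q) / (1 - p * q)"

definition beta_pq :: "complex \<Rightarrow> complex \<Rightarrow> complex" where
  "beta_pq p q = q * (1 - p) / (1 - p * q)"

definition gamma_pq :: "complex \<Rightarrow> complex \<Rightarrow> complex" where
  "gamma_pq p q = (1 - p) * (1 - q) / (1 - p * q)"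

definition S_pq :: "complex \<Rightarrow> complex \<Rightarrow> complex \<times> complex \<times> complex \<Rightarrow> complex \<times> complex \<times> complex" where
  "S_pq p q t = (case t of (a, b, c) \<Rightarrow>
     (alpha_pq p q * a + beta_pq p q * b + gamma_pq p q * c,
      alpha_pq p q * b + beta_pq p q * c + gamma_pq p q * a,
      alpha_pq p q * c + beta_pq p q * a + gamma_pq p q * b))"

definition t_pq :: "complex \<Rightarrow> complex \<Rightarrow> complex" where
  "t_pq p q = (p - 1) * (2 * q - 1) / (p - q)"

definition regular_pq :: "complex \<Rightarrow> complex \<Rightarrow> bool" where
  "regular_pq p q \<longleftrightarrow>
     (p = q \<and> p \<noteq> 1/2) \<or> (p \<noteq> q \<and> (t_pq p q \<in> \<real> \<or> Im (t_pq p q) > 0))"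

text \<open>xi_{p,q} as a point of P^1(C), given by homogeneous coordinates [num : den];
  xi = infinity iff den = 0, otherwise xi = num / den.\<close>
definition xi_num :: "complex \<Rightarrow> complex \<Rightarrow> complex" where
  "xi_num p q = (p - q) + (p - 1) * (2 * q - 1) * omega"

definition xi_den :: "complex \<Rightarrow> complex \<Rightarrow> complex" where
  "xi_den p q = (p - q) + (p - 1) * (2 * q - 1) * omega ^ 2"

definition triangle_triple :: "complex \<times> complex \<times> complex \<Rightarrow> bool" where
  "triangle_triple t = (case t of (a, b, c) \<Rightarrow> a \<noteq> b \<and> b \<noteq> c \<and> a \<noteq> c)"

definition positive_triangle :: "complex \<times> complex \<times> complex \<Rightarrow> bool" where
  "positive_triangle t = (case t of (a, b, c) \<Rightarrow>
     triangle_triple (a, b, c) \<and> \<not> collinear {a, b, c} \<and> Im ((a - b) / (c - b)) > 0)"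

definition phi :: "complex \<times> complex \<times> complex \<Rightarrow> complex" where
  "phi t = (case t of (a, b, c) \<Rightarrow>
     ((a + b * omega + c * omega ^ 2) / (a + b * omega ^ 2 + c * omega)) ^ 3)"

end

theory Submission
  imports Defs
begin

text \<open>The map S_pq is circulant, so it acts diagonally on the discrete Fourier coefficients
  a + b omega + c omega^2 and a + b omega^2 + c omega of a triple: it multiplies them by
  xi_num / (1 - pq) and xi_den / (1 - pq) respectively, hence multiplies phi by xi^3.
  For p \<noteq> q and t = t_pq one has xi = (1 + t omega) / (1 + t omega^2), and
  |1 + t omega|^2 = |1 + t omega^2|^2 - 2 sqrt 3 Im t, so |xi| \<le> 1 exactly when Im t \<ge> 0.\<close>

lemma omega_eq: "omega = Complex (-1/2) (sqrt 3 / 2)"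
  using sin_120' cos_120' by (simp add: omega_def cis.ctr mult.commute)

lemma omega_squared_eq_cnj: "omega\<^sup>2 = cnj omega"
  by (simp add: omega_eq complex_eq_iff power2_eq_square field_simps)

lemma omega_cube: "omega ^ 3 = 1"
proof -
  have "omega ^ 3 = omega * cnj omega"
    by (simp add: power3_eq_cube omega_squared_eq_cnj[symmetric] power2_eq_square)
  also have "\<dots> = 1" by (simp add: omega_eq complex_eq_iff field_simps)
  finally show ?thesis .
qed

lemma omega_sum_zero: "1 + omega + omega\<^sup>2 = 0"
  by (simp add: omega_eq complex_eq_iff power2_eq_square)

lemma omega_pow_4: "omega ^ 4 = omega"
  using omega_cube by (simp add: power_numeral_reduce)

lemma norm_omega: "cmod omega = 1"
  by (simp add: omega_eq cmod_def power2_eq_square)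

lemma circulant_fourier_coeff:
  fixes w :: complex
  assumes "w ^ 3 = 1"
  shows "(\<alpha> * a + \<beta> * b + \<gamma> * c) + (\<alpha> * b + \<beta> * c + \<gamma> * a) * w + (\<alpha> * c + \<beta> * a + \<gamma> * b) * w\<^sup>2
    = (\<alpha> + \<gamma> * w + \<beta> * w\<^sup>2) * (a + b * w + c * w\<^sup>2)"
  using assms by algebra

lemma S_pq_multiplier:
  assumes "p * q \<noteq> 1" and "1 + w + w\<^sup>2 = 0"
  shows "alpha_pq p q + gamma_pq p q * w + beta_pq p q * w\<^sup>2
    = ((p - q) + (p - 1) * (2 * q - 1) * w) / (1 - p * q)"
proof -
  have nz: "1 - p * q \<noteq> 0" using assms(1) by simp
  have "alpha_pq p q * (1 - p * q) = p * (1 - q)" "beta_pq p q * (1 - p * q) = q * (1 - p)"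
    "gamma_pq p q * (1 - p * q) = (1 - p) * (1 - q)"
    using nz by (simp_all add: alpha_pq_def beta_pq_def gamma_pq_def)
  then have "(alpha_pq p q + gamma_pq p q * w + beta_pq p q * w\<^sup>2) * (1 - p * q)
      = (p - q) + (p - 1) * (2 * q - 1) * w"
    using assms(2) by algebra
  then show ?thesis using nz by (simp add: eq_divide_eq)
qed

lemma phi_S_pq:
  assumes "p * q \<noteq> 1"
  shows "phi (S_pq p q \<Delta>) = (xi_num p q / xi_den p q) ^ 3 * phi \<Delta>"
proof -
  obtain a b c where \<Delta>: "\<Delta> = (a, b, c)" by (cases \<Delta>)
  have omega2_cube: "(omega\<^sup>2) ^ 3 = 1"
    using omega_cube by (metis power_mult_distrib power_one power2_eq_square)
  let ?\<alpha> = "alpha_pq p q" and ?\<beta> = "beta_pq p q" and ?\<gamma> = "gamma_pq p q"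
  define N where "N = xi_num p q / (1 - p * q)"
  define D where "D = xi_den p q / (1 - p * q)"
  have num: "?\<alpha> + ?\<gamma> * omega + ?\<beta> * omega\<^sup>2 = N"
    using S_pq_multiplier[OF assms omega_sum_zero] by (simp add: N_def xi_num_def)
  have "1 + omega\<^sup>2 + (omega\<^sup>2)\<^sup>2 = 0"
    using omega_sum_zero by (simp add: omega_pow_4 algebra_simps)
  from S_pq_multiplier[OF assms this]
  have den: "?\<alpha> + ?\<gamma> * omega\<^sup>2 + ?\<beta> * omega = D"
    by (simp add: D_def xi_den_def omega_pow_4)
  have "(?\<alpha> * a + ?\<beta> * b + ?\<gamma> * c) + (?\<alpha> * b + ?\<beta> * c + ?\<gamma> * a) * omega
        + (?\<alpha> * c + ?\<beta> * a + ?\<gamma> * b) * omega\<^sup>2 = N * (a + b * omega + c * omega\<^sup>2)"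
    using circulant_fourier_coeff[OF omega_cube] num by simp
  moreover have "(?\<alpha> * a + ?\<beta> * b + ?\<gamma> * c) + (?\<alpha> * b + ?\<beta> * c + ?\<gamma> * a) * omega\<^sup>2
        + (?\<alpha> * c + ?\<beta> * a + ?\<gamma> * b) * omega = D * (a + b * omega\<^sup>2 + c * omega)"
    using circulant_fourier_coeff[OF omega2_cube] den by (simp add: omega_pow_4)
  moreover have "N / D = xi_num p q / xi_den p q" using assms by (simp add: N_def D_def)
  ultimately show ?thesis
    unfolding \<Delta> S_pq_def phi_def prod.case
    by (metis times_divide_times_eq power_mult_distrib)
qed

lemma norm_one_plus_mult_omega:
  "(cmod (1 + t * omega))\<^sup>2 = (cmod (1 + t * omega\<^sup>2))\<^sup>2 - 2 * sqrt 3 * Im t"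
  unfolding omega_squared_eq_cnj cmod_power2 omega_eq by (simp add: algebra_simps power2_eq_square)

lemma mobius_omega_norm_le_one_iff:
  "1 + t * omega\<^sup>2 \<noteq> 0 \<and> cmod ((1 + t * omega) / (1 + t * omega\<^sup>2)) \<le> 1 \<longleftrightarrow> Im t \<ge> 0"
proof -
  have "cmod (1 + t * omega) \<le> cmod (1 + t * omega\<^sup>2) \<longleftrightarrow>
      (cmod (1 + t * omega))\<^sup>2 \<le> (cmod (1 + t * omega\<^sup>2))\<^sup>2"
    by (simp add: power_mono_iff)
  also have "\<dots> \<longleftrightarrow> Im t \<ge> 0"
    unfolding norm_one_plus_mult_omega by (simp add: zero_le_mult_iff)
  finally have "cmod (1 + t * omega) \<le> cmod (1 + t * omega\<^sup>2) \<longleftrightarrow> Im t \<ge> 0" .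
  moreover have "1 + t * omega\<^sup>2 \<noteq> 0" if "Im t \<ge> 0"
  proof
    assume "1 + t * omega\<^sup>2 = 0"
    \<comment> \<open>then \<open>t = -\<omega>\<close>, which lies in the lower half-plane\<close>
    moreover have "omega * (1 + t * omega\<^sup>2) = omega + t"
      using omega_cube by (simp add: algebra_simps power2_eq_square power3_eq_cube)
    ultimately have "t = - omega" by (simp add: eq_neg_iff_add_eq_0 add.commute)
    then show False using that by (simp add: omega_eq)
  qed
  ultimately show ?thesis by (auto simp: norm_divide divide_le_eq_1)
qed

lemma regular_pq_iff_xi:
  assumes "p * q \<noteq> 1" and "(p, q) \<noteq> (1/2, 1/2)"
  shows "regular_pq p q \<longleftrightarrow> xi_den p q \<noteq> 0 \<and> cmod (xi_num p q / xi_den p q) \<le> 1"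
proof (cases "p = q")
  case True
  \<comment> \<open>then \<open>\<xi> = \<omega>/\<omega>\<^sup>2\<close>, which lies on the unit circle\<close>
  have "p \<noteq> 1/2" using True assms(2) by simp
  then have "2 * p - 1 \<noteq> 0" by (auto simp: field_simps)
  moreover have "p \<noteq> 1" using assms(1) True by auto
  ultimately have "(p - 1) * (2 * p - 1) \<noteq> 0" by simp
  moreover have "omega \<noteq> 0" using norm_omega by auto
  ultimately show ?thesis using True \<open>p \<noteq> 1/2\<close>
    by (simp add: regular_pq_def xi_num_def xi_den_def norm_divide norm_mult norm_power norm_omega)
next
  case False
  define t where "t = t_pq p q"
  have t: "(p - 1) * (2 * q - 1) = t * (p - q)" using False by (simp add: t_def t_pq_def)
  have "xi_num p q = (p - q) * (1 + t * omega)" and "xi_den p q = (p - q) * (1 + t * omega\<^sup>2)"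
    unfolding xi_num_def xi_den_def t by (simp_all add: algebra_simps)
  moreover have "regular_pq p q \<longleftrightarrow> Im t \<ge> 0"
    using False by (auto simp: regular_pq_def t_def complex_is_Real_iff)
  ultimately show ?thesis using False mobius_omega_norm_le_one_iff[of t] by simp
qed

theorem mainTheorem3:
  fixes p q :: complex
  assumes "p * q \<noteq> 1" and "(p, q) \<noteq> (1/2, 1/2)"
  shows "(regular_pq p q \<longleftrightarrow> xi_den p q \<noteq> 0 \<and> cmod (xi_num p q / xi_den p q) \<le> 1)
    \<and> (regular_pq p q \<longrightarrow> (\<forall>\<Delta>. positive_triangle \<Delta> \<longrightarrow>
          phi (S_pq p q \<Delta>) = (xi_num p q / xi_den p q) ^ 3 * phi \<Delta>))"
  using regular_pq_iff_xi[OF assms] phi_S_pq[OF assms(1)] by blast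

end
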